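(* Let $F$ be an algebraically closed field of characteristic $\neq 2$, $R=F[t]$ with the involution ${}^*$ described in the context. Let $A,B\in M_2(R)$ be skew-hermitian with $\gcd(A)=\gcd(B)=1$ and $\det(A)=\det(B)\neq 0$. Then $A$ and $B$ are congruent.
   Context: $R=F[t]$ is the polynomial ring over $F$, and ${}^*$ is the $F$-algebra involution of $R$ that is the identity on $F$ and sends $t$ to $-t$. For $A=(a_{ij})\in M_n(R)$, $A^*$ is the matrix whose $(i,j)$ entry is $a_{ji}^*$; $A$ is skew-hermitian if $A^*=-A$. Congruence: $B=S^*AS$ for some $S\in\mathrm{GL}_n(R)$. $\gcd(A)$ denotes the monic generator (or $0$) of the ideal generated by all entries of $A$. *)

theory Defs
  imports "HOL-Analysis.Analysis" "HOL-Computational_Algebra.Polynomial_Factorial"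
begin

definition pinv :: "'a::comm_ring_1 poly \<Rightarrow> 'a poly" where
  "pinv p = pcompose p [:0, -1:]"

definition mstar :: "'a::comm_ring_1 poly ^ 'n ^ 'n \<Rightarrow> 'a poly ^ 'n ^ 'n" where
  "mstar A = (\<chi> i j. pinv (A $ j $ i))"

definition skew_hermitian :: "'a::comm_ring_1 poly ^ 'n ^ 'n \<Rightarrow> bool" where
  "skew_hermitian A \<longleftrightarrow> mstar A = - A"

definition entry_ideal :: "'a::comm_ring_1 poly ^ 'n ^ 'n \<Rightarrow> 'a poly set" where
  "entry_ideal A = {\<Sum>i\<in>UNIV. \<Sum>j\<in>UNIV. c i j * A $ i $ j | c. True}"

definition mgcd :: "'a::field poly ^ 'n ^ 'n \<Rightarrow> 'a poly" where
  "mgcd A = (THE g. (g = 0 \<or> lead_coeff g = 1) \<and> entry_ideal A = {x. g dvd x})"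

definition congruent_mat :: "'a::comm_ring_1 poly ^ 'n ^ 'n \<Rightarrow> 'a poly ^ 'n ^ 'n \<Rightarrow> bool" where
  "congruent_mat A B \<longleftrightarrow> (\<exists>S. invertible S \<and> B = mstar S ** A ** S)"

end

theory Submission
  imports Defs
begin

text \<open>
  Write \<open>A = [[a, b], [-b\<^sup>*, d]]\<close> with \<open>a\<^sup>* = -a\<close>, \<open>d\<^sup>* = -d\<close>. Then
  \<open>\<delta> = det A = a d + b b\<^sup>*\<close> is even, and since \<open>a(0) = d(0) = 0\<close>, unit content forces
  \<open>\<delta>(0) = b(0)\<^sup>2 \<noteq> 0\<close>. The roots of \<open>\<delta>\<close> therefore come in pairs \<open>\<plusminus>r\<close> with \<open>r \<noteq> 0\<close>, and choosing
  one root from each pair gives \<open>\<delta> = \<beta> \<beta>\<^sup>*\<close> with \<open>\<beta>\<close>, \<open>\<beta>\<^sup>*\<close> coprime. Every such \<open>A\<close> is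
  congruent to the hyperbolic form \<open>[[0, \<beta>\<^sup>*], [-\<beta>, 0]]\<close>, which depends only on \<open>\<delta>\<close>:
  a shear by a generic linear \<open>y\<close> makes the corner \<open>a\<close> coprime to \<open>\<delta>\<close>; if \<open>g\<close> is a
  Bezout combination dividing \<open>a\<close> and \<open>\<beta> - b\<close>, the primitive vector \<open>(\<beta> - b, a) / g\<close> is
  isotropic, and completing it to a basis makes the corner \<open>0\<close> and the off-diagonal entry
  a constant multiple of \<open>\<beta>\<^sup>*\<close> (constant because \<open>g\<close> divides \<open>g\<^sup>*\<close>); finally, as
  \<open>\<beta>\<^sup>*\<close> and \<open>\<beta>\<close> are coprime, a unipotent change of basis, which needs division by 2,
  clears the remaining diagonal entry.
\<close>

section \<open>The involution \<open>t \<mapsto> -t\<close>\<close>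

lemma pinv_mult [simp]: "pinv (p * q) = pinv p * pinv q"
  by (simp add: pinv_def pcompose_mult)

lemma pinv_add [simp]: "pinv (p + q) = pinv p + pinv q"
  by (simp add: pinv_def pcompose_add)

lemma pinv_diff [simp]: "pinv (p - q) = pinv p - (pinv q :: 'a::comm_ring_1 poly)"
  by (simp add: pinv_def pcompose_diff)

lemma pinv_uminus [simp]: "pinv (- p) = - pinv (p :: 'a::comm_ring_1 poly)"
  by (simp add: pinv_def pcompose_uminus)

lemma pinv_pCons_0 [simp]: "pinv [:c:] = [:c:]"
  by (simp add: pinv_def)

lemma pinv_0 [simp]: "pinv 0 = 0"
  by (simp add: pinv_def)

lemma pinv_1 [simp]: "pinv 1 = 1"
  by (simp add: pinv_def pcompose_1)

lemma pinv_smult [simp]: "pinv (smult c p) = smult c (pinv p)"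
  by (simp add: pinv_def pcompose_smult)

lemma poly_pinv [simp]: "poly (pinv p) x = poly p (- x)"
  by (simp add: pinv_def poly_pcompose)

lemma pinv_pinv [simp]: "pinv (pinv (p :: 'a::comm_ring_1 poly)) = p"
proof -
  have "pcompose [:0, -1:] [:0, -1:] = ([:0, 1:] :: 'a poly)"
    by (simp add: pcompose_pCons)
  then show ?thesis
    unfolding pinv_def by (simp flip: pcompose_assoc)
qed

lemma pinv_eq_0_iff [simp]: "pinv p = 0 \<longleftrightarrow> p = (0 :: 'a::comm_ring_1 poly)"
  by (metis pinv_0 pinv_pinv)

lemma pinv_sum: "pinv (sum f A) = (\<Sum>i\<in>A. pinv (f i))"
  by (simp add: pinv_def pcompose_sum)

lemma degree_pinv [simp]: "degree (pinv (p :: 'a::idom poly)) = degree p"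
  by (simp add: pinv_def degree_pcompose)

lemma pinv_eq_smult_if_dvd:
  fixes p :: "'a::field poly"
  assumes "p \<noteq> 0" and "p dvd pinv p"
  obtains \<kappa> where "\<kappa> \<noteq> 0" and "pinv p = smult \<kappa> p"
proof -
  obtain w where w: "pinv p = p * w"
    using assms(2) by blast
  then have "w \<noteq> 0"
    using assms(1) by auto
  then have "degree w = 0"
    using w assms(1) by (metis add_cancel_left_right degree_mult_eq degree_pinv)
  then obtain \<kappa> where "w = [:\<kappa>:]"
    by (meson degree_eq_zeroE)
  with w \<open>w \<noteq> 0\<close> that show ?thesis
    by simp
qed

lemma pinv_linear [simp]: "pinv [:c, 1:] = - [:- c, 1:]"
  by (simp add: pinv_def pcompose_pCons)

section \<open>\<open>2 \<times> 2\<close> matrices and congruence\<close>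

definition mk2 :: "'a \<Rightarrow> 'a \<Rightarrow> 'a \<Rightarrow> 'a \<Rightarrow> 'a ^ 2 ^ 2" where
  "mk2 a b c d = (\<chi> i j. if i = 1 then (if j = 1 then a else b) else (if j = 1 then c else d))"

lemma mk2_nth [simp]:
  "mk2 a b c d $ 1 $ 1 = a" "mk2 a b c d $ 1 $ 2 = b"
  "mk2 a b c d $ 2 $ 1 = c" "mk2 a b c d $ 2 $ 2 = d"
  by (simp_all add: mk2_def)

lemma mk2_eta: "M = mk2 (M $ 1 $ 1) (M $ 1 $ 2) (M $ 2 $ 1) (M $ 2 $ 2)"
  by (simp add: vec_eq_iff forall_2)

lemma mk2_eq_iff: "mk2 a b c d = mk2 a' b' c' d' \<longleftrightarrow> a = a' \<and> b = b' \<and> c = c' \<and> d = d'"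
  by (metis mk2_nth)

lemma mk2_mult:
  "mk2 a b c d ** mk2 e f g h =
     mk2 (a * e + b * g) (a * f + b * h) (c * e + d * g) (c * f + d * (h :: 'a::semiring_1))"
  by (simp add: vec_eq_iff forall_2 matrix_matrix_mult_def sum_2)

lemma mat_1_mk2: "(mat 1 :: 'a::zero_neq_one ^ 2 ^ 2) = mk2 1 0 0 1"
  by (simp add: vec_eq_iff forall_2 mat_def)

lemma uminus_mk2: "- mk2 a b c d = mk2 (- a) (- b) (- c) (- (d :: 'a::ab_group_add))"
  by (simp add: vec_eq_iff forall_2)

lemma det_mk2: "det (mk2 a b c d) = a * d - b * (c :: 'a::comm_ring_1)"
  by (simp add: det_2)

lemma mstar_mk2: "mstar (mk2 a b c d) = mk2 (pinv a) (pinv c) (pinv b) (pinv d)"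
  by (simp add: vec_eq_iff forall_2 mstar_def)

lemma mstar_mult: "mstar (X ** Y) = mstar Y ** (mstar X :: 'a::comm_ring_1 poly ^ 'n ^ 'n)"
  by (simp add: vec_eq_iff mstar_def matrix_matrix_mult_def pinv_sum mult.commute)

lemma mstar_mstar [simp]: "mstar (mstar X) = X"
  by (simp add: vec_eq_iff mstar_def)

lemma mstar_mat_1 [simp]: "mstar (mat 1) = (mat 1 :: 'a::comm_ring_1 poly ^ 'n ^ 'n)"
  by (simp add: vec_eq_iff mstar_def mat_def)

lemma det_mstar_2: "det (mstar (S :: 'a::comm_ring_1 poly ^ 2 ^ 2)) = pinv (det S)"
  by (subst (1 2) mk2_eta[of S]) (simp add: mstar_mk2 det_mk2)

lemma det_congruence_2:
  "det (mstar S ** A ** (S :: 'a::comm_ring_1 poly ^ 2 ^ 2)) = pinv (det S) * det A * det S"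
  by (simp add: det_mul det_mstar_2)

lemma invertible_mk2:
  assumes "a * d - b * (c :: 'a::comm_ring_1) dvd 1"
  shows "invertible (mk2 a b c d)"
proof -
  obtain e where e: "(a * d - b * c) * e = 1"
    using assms by (auto elim: dvdE)
  show ?thesis
    unfolding invertible_def
    by (rule exI[of _ "mk2 (e * d) (- e * b) (- e * c) (e * a)"])
      (use e in \<open>auto simp: mk2_mult mat_1_mk2 mk2_eq_iff algebra_simps\<close>)
qed

lemma congruent_mat_sym:
  assumes "congruent_mat A B"
  shows "congruent_mat B A"
proof -
  obtain S where S: "invertible S" "B = mstar S ** A ** S"
    using assms congruent_mat_def by blast
  obtain S' where S': "S ** S' = mat 1" "S' ** S = mat 1"
    using S(1) invertible_def by blast
  have "mstar S' ** mstar S = mat 1"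
    by (metis S'(1) mstar_mult mstar_mat_1)
  then have "A = mstar S' ** B ** S'"
    unfolding S(2) by (metis S'(1) matrix_mul_assoc matrix_mul_lid matrix_mul_rid)
  moreover have "invertible S'"
    using S' invertible_def by blast
  ultimately show ?thesis
    unfolding congruent_mat_def by blast
qed

lemma congruent_mat_trans:
  assumes "congruent_mat A B" and "congruent_mat B C"
  shows "congruent_mat A C"
proof -
  obtain S where S: "invertible S" "B = mstar S ** A ** S"
    using assms(1) congruent_mat_def by blast
  obtain T where T: "invertible T" "C = mstar T ** B ** T"
    using assms(2) congruent_mat_def by blast
  have "C = mstar (S ** T) ** A ** (S ** T)"
    unfolding T(2) S(2) mstar_mult by (simp add: matrix_mul_assoc)
  moreover have "invertible (S ** T)"
    using S(1) T(1) invertible_mult by blast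
  ultimately show ?thesis
    unfolding congruent_mat_def by blast
qed

lemma congruent_mat_mk2:
  assumes "a * d - b * c dvd 1"
  shows "congruent_mat A (mstar (mk2 a b c d) ** A ** mk2 a b c d)"
  using invertible_mk2[OF assms] congruent_mat_def by blast

lemma skew_hermitian_congruence:
  assumes "skew_hermitian A"
  shows "skew_hermitian (mstar S ** A ** S)"
proof -
  have neg: "(- X) ** Y = - (X ** Y)" "X ** (- Y) = - (X ** Y)" for X Y :: "'a poly ^ 'n ^ 'n"
    by (simp_all add: vec_eq_iff matrix_matrix_mult_def sum_negf)
  show ?thesis
    using assms unfolding skew_hermitian_def
    by (simp add: mstar_mult matrix_mul_assoc neg)
qed

lemma skew_hermitian_2E:
  fixes A :: "'a::comm_ring_1 poly ^ 2 ^ 2"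
  assumes "skew_hermitian A"
  obtains a b d where "A = mk2 a b (- pinv b) d" and "pinv a = - a" and "pinv d = - d"
proof -
  have "mstar (mk2 (A$1$1) (A$1$2) (A$2$1) (A$2$2)) = - mk2 (A$1$1) (A$1$2) (A$2$1) (A$2$2)"
    using assms mk2_eta unfolding skew_hermitian_def by metis
  then have "pinv (A$1$1) = - A$1$1" "A$2$1 = - pinv (A$1$2)" "pinv (A$2$2) = - A$2$2"
    unfolding mstar_mk2 uminus_mk2 mk2_eq_iff by (metis pinv_pinv pinv_uminus)+
  then show ?thesis
    using that mk2_eta[of A] by metis
qed

section \<open>Euclidean rings and algebraically closed fields\<close>

lemma alg_closed_field_infinite: "infinite (UNIV :: 'a::alg_closed_field set)"
proof
  assume fin: "finite (UNIV :: 'a set)"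
  define q :: "'a poly" where "q = (\<Prod>x\<in>UNIV. [:- x, 1:])"
  have "degree q = card (UNIV :: 'a set)"
    unfolding q_def by (subst degree_prod_eq_sum_degree) auto
  then have "degree (1 + q) > 0"
    using fin by (simp add: degree_add_eq_right card_gt_0_iff)
  then obtain y where "poly (1 + q) y = 0"
    using alg_closed_imp_poly_has_root by blast
  moreover have "poly q y = 0"
    unfolding q_def poly_prod using fin by (simp add: prod_zero_iff)
  ultimately show False
    by simp
qed

lemma alg_closed_field_ex_not_in:
  "finite (S :: 'a::alg_closed_field set) \<Longrightarrow> \<exists>x. x \<notin> S"
  using alg_closed_field_infinite ex_new_if_finite by blast

lemma euclidean_ideal_principal:
  fixes I :: "'a::euclidean_ring set"
  assumes add: "\<And>x y. x \<in> I \<Longrightarrow> y \<in> I \<Longrightarrow> x + y \<in> I"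
    and mult: "\<And>c x. x \<in> I \<Longrightarrow> c * x \<in> I"
    and "x \<in> I" "x \<noteq> 0"
  obtains g where "g \<in> I" "g \<noteq> 0" "\<And>y. y \<in> I \<Longrightarrow> g dvd y"
proof -
  let ?size = "\<lambda>n. \<exists>g\<in>I. g \<noteq> 0 \<and> euclidean_size g = n"
  obtain g where g: "g \<in> I" "g \<noteq> 0" "euclidean_size g = (LEAST n. ?size n)"
    using LeastI_ex[of ?size] assms(3,4) by blast
  have "g dvd y" if "y \<in> I" for y
  proof (rule ccontr)
    assume "\<not> g dvd y"
    then have "y mod g \<noteq> 0"
      by (simp add: mod_eq_0_iff_dvd)
    moreover have "y mod g \<in> I"
      using add mult \<open>y \<in> I\<close> g(1) by (metis minus_div_mult_eq_mod minus_mult_left diff_conv_add_uminus)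
    ultimately have "euclidean_size g \<le> euclidean_size (y mod g)"
      unfolding g(3) by (blast intro: Least_le)
    with mod_size_less[OF g(2), of y] show False
      by (simp add: not_le)
  qed
  with g that show ?thesis
    by blast
qed

lemma euclidean_bezout:
  fixes a b :: "'a::euclidean_ring"
  obtains u v where "u * a + v * b dvd a" and "u * a + v * b dvd b"
proof (cases "a = 0 \<and> b = 0")
  case True
  then show ?thesis
    using that[of 0 0] by simp
next
  case False
  let ?I = "{u * a + v * b | u v. True}"
  have add: "x + y \<in> ?I" if xy: "x \<in> ?I" "y \<in> ?I" for x y
  proof -
    obtain u v u' v' where "x = u * a + v * b" "y = u' * a + v' * b"
      using xy by blast
    then have "x + y = (u + u') * a + (v + v') * b"
      by (simp add: algebra_simps)
    then show ?thesis
      by blast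
  qed
  have mult: "c * x \<in> ?I" if x: "x \<in> ?I" for c x
  proof -
    obtain u v where "x = u * a + v * b"
      using x by blast
    then have "c * x = (c * u) * a + (c * v) * b"
      by (simp add: algebra_simps)
    then show ?thesis
      by blast
  qed
  have a: "a \<in> ?I"
    by (rule CollectI, rule exI[of _ 1], rule exI[of _ 0]) simp
  have b: "b \<in> ?I"
    by (rule CollectI, rule exI[of _ 0], rule exI[of _ 1]) simp
  obtain x where x: "x \<in> ?I" "x \<noteq> 0"
    using False a b by blast
  obtain g where "g \<in> ?I" "g \<noteq> 0" and g_dvd: "\<And>y. y \<in> ?I \<Longrightarrow> g dvd y"
    using euclidean_ideal_principal[OF add mult x] by blast
  then obtain u v where "g = u * a + v * b"
    by blast
  with g_dvd[OF a] g_dvd[OF b] show ?thesis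
    using that[of u v] by simp
qed

lemma euclidean_bezout_cofactors:
  fixes a b :: "'a::euclidean_ring"
  assumes "a \<noteq> 0"
  obtains g a' b' u v where "g = u * a + v * b" and "g \<noteq> 0"
    and "a = g * a'" and "b = g * b'" and "u * a' + v * b' = 1"
proof -
  obtain u v where "u * a + v * b dvd a" and "u * a + v * b dvd b"
    by (rule euclidean_bezout)
  moreover define g where "g = u * a + v * b"
  ultimately obtain a' b' where a': "a = g * a'" and b': "b = g * b'"
    by (meson dvdE)
  have "g \<noteq> 0"
    using assms a' by auto
  have "g * (u * a' + v * b') = u * a + v * b"
    unfolding a' b' by (simp add: algebra_simps)
  also have "\<dots> = g * 1"
    by (simp add: g_def)
  finally have "u * a' + v * b' = 1"
    using \<open>g \<noteq> 0\<close> by (metis mult_left_cancel)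
  with that g_def \<open>g \<noteq> 0\<close> a' b' show ?thesis
    by blast
qed

lemma coprime_imp_bezout:
  fixes a b :: "'a::euclidean_ring"
  assumes "coprime a b"
  obtains u v where "u * a + v * b = 1"
proof -
  obtain u v where "u * a + v * b dvd a" "u * a + v * b dvd b"
    using euclidean_bezout by blast
  then have "is_unit (u * a + v * b)"
    using assms coprime_common_divisor by blast
  then obtain h where "1 = (u * a + v * b) * h"
    by (rule dvdE)
  then show ?thesis
    using that[of "h * u" "h * v"] by (simp add: algebra_simps)
qed

lemma coprime_if_no_common_root:
  fixes p q :: "'a::alg_closed_field poly"
  assumes "\<And>x. poly p x = 0 \<Longrightarrow> poly q x \<noteq> 0"
  shows "coprime p q"
proof (rule coprimeI)
  fix c
  assume c: "c dvd p" "c dvd q"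
  then have "c \<noteq> 0"
    using assms[of 0] by auto
  moreover have "degree c = 0"
  proof (rule ccontr)
    assume "degree c \<noteq> 0"
    then obtain x where "poly c x = 0"
      using alg_closed_imp_poly_has_root by blast
    with c assms show False
      by (meson dvd_trans poly_eq_0_iff_dvd)
  qed
  ultimately show "is_unit c"
    by (simp add: is_unit_iff_degree)
qed

section \<open>The ideal of entries\<close>

lemma entry_ideal_add:
  assumes "x \<in> entry_ideal A" and "y \<in> entry_ideal A"
  shows "x + y \<in> entry_ideal A"
proof -
  obtain c c' where "x = (\<Sum>i\<in>UNIV. \<Sum>j\<in>UNIV. c i j * A $ i $ j)"
    and "y = (\<Sum>i\<in>UNIV. \<Sum>j\<in>UNIV. c' i j * A $ i $ j)"
    using assms unfolding entry_ideal_def by blast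
  then have "x + y = (\<Sum>i\<in>UNIV. \<Sum>j\<in>UNIV. (c i j + c' i j) * A $ i $ j)"
    by (simp add: sum.distrib distrib_right)
  then show ?thesis
    unfolding entry_ideal_def by (intro CollectI exI[of _ "\<lambda>i j. c i j + c' i j"]) simp
qed

lemma entry_ideal_mult:
  assumes "x \<in> entry_ideal A"
  shows "k * x \<in> entry_ideal A"
proof -
  obtain c where "x = (\<Sum>i\<in>UNIV. \<Sum>j\<in>UNIV. c i j * A $ i $ j)"
    using assms unfolding entry_ideal_def by blast
  then have "k * x = (\<Sum>i\<in>UNIV. \<Sum>j\<in>UNIV. (k * c i j) * A $ i $ j)"
    by (simp add: sum_distrib_left mult.assoc)
  then show ?thesis
    unfolding entry_ideal_def by (intro CollectI exI[of _ "\<lambda>i j. k * c i j"]) simp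
qed

lemma entry_ideal_entry: "(A :: 'a::comm_ring_1 poly ^ 'n ^ 'n) $ i $ j \<in> entry_ideal A"
proof -
  have "(\<Sum>i'\<in>UNIV. \<Sum>j'\<in>UNIV. of_bool (i' = i \<and> j' = j) * A $ i' $ j') = A $ i $ j"
    by (simp add: of_bool_conj sum_distrib_left[symmetric] mult.assoc)
  then show ?thesis
    unfolding entry_ideal_def by (intro CollectI exI[of _ "\<lambda>i' j'. of_bool (i' = i \<and> j' = j)"]) simp
qed

lemma monic_poly_dvd_antisym:
  fixes p q :: "'a::field poly"
  assumes "p dvd q" and "q dvd p" and "lead_coeff p = 1" and "lead_coeff q = 1"
  shows "p = q"
proof -
  obtain w where w: "q = p * w"
    using assms(1) by blast
  have "p \<noteq> 0"
    using assms(3) by auto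
  then have "w dvd 1"
    using assms(2) unfolding w by (metis dvd_times_left_cancel_iff mult_1_right)
  then obtain c where c: "w = [:c:]"
    by (auto simp: is_unit_poly_iff)
  have "lead_coeff q = lead_coeff p * c"
    unfolding w c lead_coeff_mult by simp
  with w c assms(3,4) show ?thesis
    by simp
qed

lemma entry_ideal_monic_generator:
  fixes A :: "'a::field poly ^ 'n ^ 'n"
  shows "\<exists>g. (g = 0 \<or> lead_coeff g = 1) \<and> entry_ideal A = {x. g dvd x}"
proof (cases "\<forall>i j. A $ i $ j = 0")
  case True
  have "entry_ideal A \<subseteq> {0}"
    unfolding entry_ideal_def using True by auto
  moreover have "0 \<in> entry_ideal A"
    using entry_ideal_mult[OF entry_ideal_entry, of 0] by simp
  ultimately have "entry_ideal A = {0}"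
    by blast
  then show ?thesis
    by (intro exI[of _ 0]) simp
next
  case False
  then obtain i j where "A $ i $ j \<noteq> 0"
    by blast
  then obtain g where g: "g \<in> entry_ideal A" "g \<noteq> 0" "\<And>x. x \<in> entry_ideal A \<Longrightarrow> g dvd x"
    using euclidean_ideal_principal[OF entry_ideal_add entry_ideal_mult entry_ideal_entry] by metis
  define g' where "g' = smult (inverse (lead_coeff g)) g"
  have "lead_coeff g' = 1"
    unfolding g'_def using g(2) by simp
  moreover have "entry_ideal A = {x. g' dvd x}"
  proof safe
    fix x
    assume "x \<in> entry_ideal A"
    then show "g' dvd x"
      unfolding g'_def using g(2,3) by (simp add: smult_dvd_iff)
  next
    fix x
    assume "g' dvd x"
    then have "g dvd x"
      unfolding g'_def using g(2) by (simp add: smult_dvd_iff)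
    then obtain k where "x = g * k"
      by (rule dvdE)
    then show "x \<in> entry_ideal A"
      using entry_ideal_mult[OF g(1), of k] by (simp add: mult.commute)
  qed
  ultimately show ?thesis
    by (intro exI[of _ g']) simp
qed

lemma one_in_entry_ideal_if_mgcd_eq_1:
  fixes A :: "'a::field poly ^ 'n ^ 'n"
  assumes "mgcd A = 1"
  shows "1 \<in> entry_ideal A"
proof -
  let ?generates = "\<lambda>g. (g = 0 \<or> lead_coeff g = 1) \<and> entry_ideal A = {x. g dvd x}"
  have unique: "g = g'" if "?generates g" and "?generates g'" for g g'
  proof -
    have "{x. g dvd x} = {x. g' dvd x}"
      using that by simp
    then have "g dvd g'" and "g' dvd g"
      by (metis mem_Collect_eq dvd_refl)+
    with that show ?thesis
      by (metis dvd_0_left monic_poly_dvd_antisym)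
  qed
  obtain g where g: "?generates g"
    using entry_ideal_monic_generator by blast
  have "?generates (mgcd A)"
    unfolding mgcd_def by (rule theI[of ?generates, OF g]) (erule unique[OF _ g])
  then have "entry_ideal A = {x. mgcd A dvd x}"
    by (rule conjunct2)
  with assms show ?thesis
    by (simp only: mem_Collect_eq one_dvd)
qed

lemma entry_nonvanishing_if_mgcd_eq_1:
  fixes A :: "'a::field poly ^ 'n ^ 'n"
  assumes "mgcd A = 1"
  obtains i j where "poly (A $ i $ j) x \<noteq> 0"
proof (rule ccontr)
  assume "\<not> thesis"
  with that have vanish: "poly (A $ i $ j) x = 0" for i j
    by blast
  obtain c where "1 = (\<Sum>i\<in>UNIV. \<Sum>j\<in>UNIV. c i j * A $ i $ j)"
    using one_in_entry_ideal_if_mgcd_eq_1[OF assms] unfolding entry_ideal_def by blast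
  then have "poly 1 x = poly (\<Sum>i\<in>UNIV. \<Sum>j\<in>UNIV. c i j * A $ i $ j) x"
    by (rule arg_cong)
  also have "\<dots> = 0"
    using vanish by (simp add: poly_sum)
  finally show False
    by simp
qed

section \<open>Even polynomials as norms\<close>

definition no_opposite_roots :: "'a::comm_ring_1 poly \<Rightarrow> bool" where
  "no_opposite_roots \<beta> \<longleftrightarrow> (\<forall>x. poly \<beta> x = 0 \<longrightarrow> poly \<beta> (- x) \<noteq> 0)"

lemma even_poly_split_root_pair:
  fixes \<delta> :: "'a::idom poly"
  assumes "pinv \<delta> = \<delta>" and "poly \<delta> r = 0" and "r + r \<noteq> 0"
  obtains \<delta>' where "\<delta> = [:- r, 1:] * [:r, 1:] * \<delta>'" and "pinv \<delta>' = \<delta>'"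
proof -
  obtain q where q: "\<delta> = [:- r, 1:] * q"
    using assms(2) poly_eq_0_iff_dvd by blast
  have "poly \<delta> (- r) = 0"
    using assms(1,2) by (metis poly_pinv minus_minus)
  then have "poly q (- r) = 0"
    using q assms(3) by (simp add: add_eq_0_iff)
  then obtain \<delta>' where \<delta>': "q = [:r, 1:] * \<delta>'"
    using poly_eq_0_iff_dvd by (metis dvdE minus_minus)
  let ?e = "[:- r, 1:] * [:r, 1:]"
  have e: "pinv ?e = ?e"
    by (simp only: pinv_mult pinv_linear minus_minus minus_mult_minus mult.commute)
  moreover have "?e \<noteq> 0"
    by simp
  moreover have "?e * pinv \<delta>' = ?e * \<delta>'"
    using assms(1) pinv_mult[of ?e \<delta>'] e unfolding q \<delta>' by (metis mult.assoc)
  ultimately have "pinv \<delta>' = \<delta>'"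
    by (metis mult_left_cancel)
  moreover have "\<delta> = ?e * \<delta>'"
    unfolding q \<delta>' by (simp only: mult.assoc)
  ultimately show ?thesis
    using that by blast
qed

lemma linear_times_pinv:
  fixes i s :: "'a::comm_ring_1"
  assumes "i * i = -1"
  shows "smult i [:- s, 1:] * pinv (smult i [:- s, 1:]) = [:- s, 1:] * [:s, 1:]"
proof -
  have "smult i [:- s, 1:] * pinv (smult i [:- s, 1:]) = smult (i * i) ([:- s, 1:] * - [:s, 1:])"
    by (simp only: pinv_smult pinv_linear minus_minus mult_smult_left mult_smult_right smult_smult)
  then show ?thesis
    using assms by simp
qed

lemma no_opposite_roots_mult_linear:
  fixes \<beta>' :: "'a::idom poly" and i :: 'a
  assumes i: "i * i = -1" and "r + r \<noteq> 0" and "no_opposite_roots \<beta>'"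
  obtains \<beta> where "\<beta> * pinv \<beta> = [:- r, 1:] * [:r, 1:] * (\<beta>' * pinv \<beta>')"
    and "no_opposite_roots \<beta>"
proof -
  obtain s where s: "s = r \<or> s = - r" and "poly \<beta>' (- s) \<noteq> 0"
    using assms(3) unfolding no_opposite_roots_def by (metis minus_minus)
  have "s + s \<noteq> 0"
    using s assms(2) by (auto simp: add_eq_0_iff)
  define \<beta> where "\<beta> = smult i [:- s, 1:] * \<beta>'"
  have "\<beta> * pinv \<beta> = (smult i [:- s, 1:] * pinv (smult i [:- s, 1:])) * (\<beta>' * pinv \<beta>')"
    unfolding \<beta>_def pinv_mult by (simp only: mult_ac)
  also have "\<dots> = [:- r, 1:] * [:r, 1:] * (\<beta>' * pinv \<beta>')"
    unfolding linear_times_pinv[OF i] using s by (auto simp: mult_ac)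
  finally have "\<beta> * pinv \<beta> = [:- r, 1:] * [:r, 1:] * (\<beta>' * pinv \<beta>')" .
  moreover have "no_opposite_roots \<beta>"
    unfolding no_opposite_roots_def
  proof (intro allI impI)
    fix x
    assume "poly \<beta> x = 0"
    have poly_\<beta>: "poly \<beta> y = i * (y - s) * poly \<beta>' y" for y
      unfolding \<beta>_def by (simp add: algebra_simps)
    have "i \<noteq> 0"
      using i by auto
    then have "x = s \<or> poly \<beta>' x = 0"
      using \<open>poly \<beta> x = 0\<close> poly_\<beta> by simp
    then have "- x \<noteq> s \<and> poly \<beta>' (- x) \<noteq> 0"
      using \<open>poly \<beta>' (- s) \<noteq> 0\<close> \<open>s + s \<noteq> 0\<close> assms(3)
      unfolding no_opposite_roots_def by (auto simp: add_eq_0_iff)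
    with \<open>i \<noteq> 0\<close> show "poly \<beta> (- x) \<noteq> 0"
      using poly_\<beta> by simp
  qed
  ultimately show ?thesis
    using that by blast
qed

lemma even_poly_factorization:
  fixes \<delta> :: "'a::alg_closed_field poly"
  assumes two: "(2::'a) \<noteq> 0" and "pinv \<delta> = \<delta>" and "poly \<delta> 0 \<noteq> 0"
  obtains \<beta> where "\<beta> * pinv \<beta> = \<delta>" and "no_opposite_roots \<beta>"
proof -
  obtain i :: 'a where i: "i * i = -1"
    using nth_root_exists[of 2 "-1"] by (auto simp: power2_eq_square)
  have "\<exists>\<beta>. \<beta> * pinv \<beta> = \<delta> \<and> no_opposite_roots \<beta>"
    using assms(2,3)
  proof (induction "degree \<delta>" arbitrary: \<delta> rule: less_induct)
    case less
    show ?case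
    proof (cases "degree \<delta> = 0")
      case True
      then obtain c where c: "\<delta> = [:c:]"
        by (rule degree_eq_zeroE)
      obtain e where "e ^ 2 = c"
        using nth_root_exists[of 2 c] by auto
      with c less.prems(2) show ?thesis
        by (intro exI[of _ "[:e:]"]) (auto simp: power2_eq_square no_opposite_roots_def)
    next
      case False
      then obtain r where r: "poly \<delta> r = 0"
        using alg_closed_imp_poly_has_root by blast
      have "r \<noteq> 0"
        using r less.prems(2) by auto
      with two have "r + r \<noteq> 0"
        by (metis mult_2 mult_eq_0_iff)
      then obtain \<delta>' where \<delta>': "\<delta> = [:- r, 1:] * [:r, 1:] * \<delta>'" "pinv \<delta>' = \<delta>'"
        using even_poly_split_root_pair[OF less.prems(1) r] by blast
      have "poly \<delta>' 0 \<noteq> 0"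
        using less.prems(2) unfolding \<delta>'(1) by simp
      moreover from this have "degree \<delta> = degree ([:- r, 1:] * [:r, 1:]) + degree \<delta>'"
        unfolding \<delta>'(1) by (intro degree_mult_eq) auto
      then have "degree \<delta>' < degree \<delta>"
        by simp
      ultimately obtain \<beta>' where "\<beta>' * pinv \<beta>' = \<delta>'" and "no_opposite_roots \<beta>'"
        using less.hyps \<delta>'(2) by blast
      then show ?thesis
        using no_opposite_roots_mult_linear[OF i \<open>r + r \<noteq> 0\<close>] \<delta>'(1) by metis
    qed
  qed
  with that show ?thesis
    by blast
qed

section \<open>Determinant and content of a skew-hermitian \<open>2 \<times> 2\<close> matrix\<close>

lemma poly_at_0_if_pinv_eq_uminus:
  fixes a :: "'a::idom poly"
  assumes "(2::'a) \<noteq> 0" and "pinv a = - a"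
  shows "poly a 0 = 0"
proof -
  have "poly a 0 = - poly a 0"
    by (metis assms(2) poly_pinv poly_minus minus_zero)
  then have "2 * poly a 0 = 0"
    by (simp add: algebra_simps)
  with assms(1) show ?thesis
    by simp
qed

lemma skew_hermitian_2_nonvanishing:
  fixes A :: "'a::field poly ^ 2 ^ 2"
  assumes "A = mk2 a b (- pinv b) d" and "mgcd A = 1"
  shows "poly a x \<noteq> 0 \<or> poly b x \<noteq> 0 \<or> poly b (- x) \<noteq> 0 \<or> poly d x \<noteq> 0"
proof -
  obtain i j where "poly (A $ i $ j) x \<noteq> 0"
    using entry_nonvanishing_if_mgcd_eq_1[OF assms(2)] by blast
  with assms(1) show ?thesis
    using exhaust_2[of i] exhaust_2[of j] by auto
qed

lemma det_skew_hermitian_2_even: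
  fixes A :: "'a::comm_ring_1 poly ^ 2 ^ 2"
  assumes "skew_hermitian A"
  shows "pinv (det A) = det A"
proof -
  obtain a b d where "A = mk2 a b (- pinv b) d" "pinv a = - a" "pinv d = - d"
    using skew_hermitian_2E[OF assms] .
  then show ?thesis
    by (simp add: det_mk2 mult.commute)
qed

lemma det_skew_hermitian_2_at_0:
  fixes A :: "'a::field poly ^ 2 ^ 2"
  assumes "(2::'a) \<noteq> 0" and "skew_hermitian A" and "mgcd A = 1"
  shows "poly (det A) 0 \<noteq> 0"
proof -
  obtain a b d where A: "A = mk2 a b (- pinv b) d" and "pinv a = - a" "pinv d = - d"
    using skew_hermitian_2E[OF assms(2)] .
  then have "poly a 0 = 0" and "poly d 0 = 0"
    using poly_at_0_if_pinv_eq_uminus[OF assms(1)] by blast+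
  moreover have "poly a 0 \<noteq> 0 \<or> poly b 0 \<noteq> 0 \<or> poly d 0 \<noteq> 0"
    using skew_hermitian_2_nonvanishing[OF A assms(3), of 0] by simp
  ultimately show ?thesis
    unfolding A by (simp add: det_mk2)
qed

section \<open>Reduction to the hyperbolic form\<close>

lemma shear_corner_nonvanishing:
  fixes A :: "'a::alg_closed_field poly ^ 2 ^ 2"
  assumes two: "(2::'a) \<noteq> 0" and "skew_hermitian A" and "mgcd A = 1"
    and "finite Z" and "0 \<notin> Z"
  obtains y where "\<And>z. z \<in> Z \<Longrightarrow> poly ((mstar (mk2 1 0 y 1) ** A ** mk2 1 0 y 1) $ 1 $ 1) z \<noteq> 0"
proof -
  obtain a b d where A: "A = mk2 a b (- pinv b) d"
    using skew_hermitian_2E[OF assms(2)] by blast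
  \<comment> \<open>For \<open>y = [:c, m:]\<close> the corner entry at \<open>z\<close> is the quadratic \<open>Q z m\<close> in \<open>c\<close>.\<close>
  define Q where "Q z m = [:poly a z + (poly b z + poly b (- z)) * m * z - poly d z * m\<^sup>2 * z\<^sup>2,
      poly b z - poly b (- z), poly d z:]" for z m
  have corner: "poly ((mstar (mk2 1 0 [:c, m:] 1) ** A ** mk2 1 0 [:c, m:] 1) $ 1 $ 1) z
      = poly (Q z m) c" for c m z
    unfolding A Q_def by (simp add: mstar_mk2 mk2_mult algebra_simps power2_eq_square)
  define bad where "bad = (\<lambda>z. - poly a z / (2 * poly b z * z)) ` Z"
  have "finite bad"
    unfolding bad_def using assms(4) by simp
  then obtain m where "m \<notin> bad"
    using alg_closed_field_ex_not_in by blast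
  have "Q z m \<noteq> 0" if "z \<in> Z" for z
  proof
    assume "Q z m = 0"
    then have "coeff (Q z m) 0 = 0" "coeff (Q z m) 1 = 0" "coeff (Q z m) 2 = 0"
      by simp_all
    then have "poly a z + (poly b z + poly b (- z)) * m * z - poly d z * m\<^sup>2 * z\<^sup>2 = 0"
      and b: "poly b (- z) = poly b z" and d: "poly d z = 0"
      unfolding Q_def by (simp_all only: coeff_pCons_0 coeff_pCons_Suc One_nat_def numeral_2_eq_2)
        simp_all
    then have "poly a z + 2 * poly b z * m * z = 0"
      unfolding b d by simp
    moreover have "z \<noteq> 0"
      using that assms(5) by auto
    moreover have "poly b z \<noteq> 0"
      using skew_hermitian_2_nonvanishing[OF A assms(3), of z] b d calculation(1) by auto
    ultimately have "m = - poly a z / (2 * poly b z * z)"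
      using two by (simp add: field_simps add_eq_0_iff)
    with \<open>m \<notin> bad\<close> that show False
      unfolding bad_def by blast
  qed
  then have "finite (\<Union>z\<in>Z. {c. poly (Q z m) c = 0})"
    using assms(4) poly_roots_finite by blast
  then obtain c where "c \<notin> (\<Union>z\<in>Z. {c. poly (Q z m) c = 0})"
    using alg_closed_field_ex_not_in by blast
  then show ?thesis
    using that[of "[:c, m:]"] corner by auto
qed

text \<open>
  \<open>g\<close> divides \<open>\<beta> (\<beta> - b)\<^sup>* = a d - b\<^sup>* (\<beta> - b)\<close>, and \<open>\<beta>\<close> can be cancelled as it is coprime to \<open>a\<close>.
\<close>

lemma bezout_divisor_dvd_pinv:
  fixes a b d \<beta> :: "'a::field poly"
  assumes "pinv a = - a" and "\<beta> * pinv \<beta> = a * d + b * pinv b" and "coprime a \<beta>"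
    and "g = u * a + v * (\<beta> - b)" and "g dvd a" and "g dvd \<beta> - b"
  shows "g dvd pinv g"
proof -
  have "\<beta> * pinv (\<beta> - b) = a * d - pinv b * (\<beta> - b)"
    using assms(2) by (simp add: algebra_simps)
  then have "g dvd \<beta> * pinv (\<beta> - b)"
    using assms(5,6) by simp
  obtain s t where "s * a + t * \<beta> = 1"
    using assms(3) by (rule coprime_imp_bezout)
  then have "pinv (\<beta> - b) = pinv (\<beta> - b) * (s * a + t * \<beta>)"
    by simp
  also have "\<dots> = (s * pinv (\<beta> - b)) * a + t * (\<beta> * pinv (\<beta> - b))"
    by (simp add: algebra_simps)
  finally have "g dvd pinv (\<beta> - b)"
    using assms(5) \<open>g dvd \<beta> * pinv (\<beta> - b)\<close> by (metis dvd_add dvd_mult dvd_mult2)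
  moreover have "g dvd pinv a"
    using assms(1,5) by simp
  ultimately show ?thesis
    unfolding assms(4) by simp
qed

definition hyperbolic :: "'a::comm_ring_1 poly \<Rightarrow> 'a poly ^ 2 ^ 2" where
  "hyperbolic \<rho> = mk2 0 \<rho> (- pinv \<rho>) 0"

text \<open>
  The first column \<open>(f', a') = (\<beta> - b, a) / g\<close> is isotropic because
  \<open>(\<beta> - b)\<^sup>* (\<beta> - b) + (\<beta> - b)\<^sup>* b + b\<^sup>* (\<beta> - b) = \<beta> \<beta>\<^sup>* - b b\<^sup>* = a d\<close>.
\<close>

lemma isotropic_change_of_basis:
  fixes a b d \<beta> g a' f' u v :: "'a::field poly"
  assumes oa: "pinv a = - a" and \<delta>: "\<beta> * pinv \<beta> = a * d + b * pinv b"
    and a': "a = g * a'" and f': "\<beta> - b = g * f'" and uv: "u * a' + v * f' = 1" and "g \<noteq> 0"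
  defines "E \<equiv> mstar (mk2 f' (- u) a' v) ** mk2 a b (- pinv b) d ** mk2 f' (- u) a' v"
  shows "E $ 1 $ 1 = 0" and "pinv g * E $ 1 $ 2 = - pinv \<beta> * g"
proof -
  have E11: "E $ 1 $ 1 = (pinv f' * a + pinv a' * (- pinv b)) * f' + (pinv f' * b + pinv a' * d) * a'"
    and E12: "E $ 1 $ 2 = (pinv f' * a + pinv a' * (- pinv b)) * (- u) + (pinv f' * b + pinv a' * d) * v"
    unfolding E_def by (simp_all add: mstar_mk2 mk2_mult)
  have pa': "pinv g * pinv a' = - a" and pf': "pinv g * pinv f' = pinv \<beta> - pinv b"
    using a' f' oa by (metis pinv_mult pinv_diff)+
  have "pinv g * g * E $ 1 $ 1 = 0"
    unfolding E11 using pa' pf' \<delta> a' f' by algebra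
  then show "E $ 1 $ 1 = 0"
    using \<open>g \<noteq> 0\<close> by simp
  have "g = u * a + v * (\<beta> - b)"
    using uv unfolding a' f' by (metis mult.left_commute distrib_left mult_1_right)
  then show "pinv g * E $ 1 $ 2 = - pinv \<beta> * g"
    unfolding E12 using pa' pf' \<delta> a' f' by algebra
qed

lemma isotropic_congruence:
  fixes A :: "'a::field poly ^ 2 ^ 2"
  assumes sh: "skew_hermitian A" and "A $ 1 $ 1 \<noteq> 0"
    and det: "\<beta> * pinv \<beta> = det A" and "coprime (A $ 1 $ 1) \<beta>"
  obtains E k where "congruent_mat A E" and "skew_hermitian E" and "E $ 1 $ 1 = 0"
    and "k \<noteq> 0" and "E $ 1 $ 2 = smult k (pinv \<beta>)"
proof -
  obtain a b d where A: "A = mk2 a b (- pinv b) d" and oa: "pinv a = - a"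
    using skew_hermitian_2E[OF sh] by blast
  have "a \<noteq> 0" and "coprime a \<beta>"
    using assms(2,4) unfolding A by simp_all
  have \<delta>: "\<beta> * pinv \<beta> = a * d + b * pinv b"
    using det unfolding A by (simp add: det_mk2)
  obtain g a' f' u v where g: "g = u * a + v * (\<beta> - b)" and "g \<noteq> 0"
    and a': "a = g * a'" and f': "\<beta> - b = g * f'" and uv: "u * a' + v * f' = 1"
    by (rule euclidean_bezout_cofactors[OF \<open>a \<noteq> 0\<close>])
  define E where "E = mstar (mk2 f' (- u) a' v) ** A ** mk2 f' (- u) a' v"
  have "congruent_mat A E"
    unfolding E_def by (rule congruent_mat_mk2) (use uv in \<open>simp add: algebra_simps\<close>)
  have "E $ 1 $ 1 = 0" and gE: "pinv g * E $ 1 $ 2 = - pinv \<beta> * g"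
    unfolding E_def A by (fact isotropic_change_of_basis[OF oa \<delta> a' f' uv \<open>g \<noteq> 0\<close>])+
  have "g dvd pinv g"
    using bezout_divisor_dvd_pinv[OF oa \<delta> \<open>coprime a \<beta>\<close> g dvdI[OF a'] dvdI[OF f']] .
  then obtain \<kappa> where "\<kappa> \<noteq> 0" and "pinv g = smult \<kappa> g"
    using pinv_eq_smult_if_dvd[OF \<open>g \<noteq> 0\<close>] by blast
  with gE have "g * smult \<kappa> (E $ 1 $ 2) = g * (- pinv \<beta>)"
    by (simp add: algebra_simps)
  then have \<kappa>E: "smult \<kappa> (E $ 1 $ 2) = - pinv \<beta>"
    using \<open>g \<noteq> 0\<close> by (metis mult_left_cancel)
  have "E $ 1 $ 2 = smult (inverse \<kappa>) (smult \<kappa> (E $ 1 $ 2))"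
    using \<open>\<kappa> \<noteq> 0\<close> by simp
  then have "E $ 1 $ 2 = smult (- inverse \<kappa>) (pinv \<beta>)"
    unfolding \<kappa>E by simp
  moreover have "skew_hermitian E"
    unfolding E_def by (rule skew_hermitian_congruence[OF sh])
  moreover have "- inverse \<kappa> \<noteq> 0"
    using \<open>\<kappa> \<noteq> 0\<close> by simp
  ultimately show ?thesis
    using that \<open>congruent_mat A E\<close> \<open>E $ 1 $ 1 = 0\<close> by blast
qed

lemma congruent_hyperbolic_if_corner_0:
  fixes A :: "'a::field poly ^ 2 ^ 2"
  assumes two: "(2::'a) \<noteq> 0" and sh: "skew_hermitian A" and "A $ 1 $ 1 = 0"
    and "coprime (A $ 1 $ 2) (pinv (A $ 1 $ 2))"
  shows "congruent_mat A (hyperbolic (A $ 1 $ 2))"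
proof -
  obtain a \<rho> d where A: "A = mk2 a \<rho> (- pinv \<rho>) d" and "pinv d = - d"
    using skew_hermitian_2E[OF sh] by blast
  have [simp]: "a = 0" and [simp]: "A $ 1 $ 2 = \<rho>"
    using assms(3) unfolding A by simp_all
  obtain u v where uv: "u * \<rho> + v * pinv \<rho> = 1"
    using assms(4) by (auto elim: coprime_imp_bezout)
  then have uv': "pinv u * pinv \<rho> + pinv v * \<rho> = 1"
    by (metis pinv_1 pinv_add pinv_mult pinv_pinv)
  define c :: "'a poly" where "c = [:inverse 2:]"
  have "c + c = 1"
    unfolding c_def using two by (simp add: one_pCons field_simps)
  \<comment> \<open>The shear by \<open>x\<close> changes the \<open>(2, 2)\<close> entry to \<open>x\<^sup>* \<rho> - \<rho>\<^sup>* x + d\<close>.\<close>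
  define x where "x = c * d * (v + pinv u)"
  have px: "pinv x = - c * d * (pinv v + u)"
    unfolding x_def c_def using \<open>pinv d = - d\<close> by simp
  have "pinv x * \<rho> - pinv \<rho> * x + d
      = d - c * d * ((u * \<rho> + v * pinv \<rho>) + (pinv u * pinv \<rho> + pinv v * \<rho>))"
    unfolding px unfolding x_def by (simp add: algebra_simps)
  also have "\<dots> = d - (c + c) * d"
    unfolding uv uv' by (simp add: algebra_simps)
  finally have "pinv x * \<rho> - pinv \<rho> * x + d = 0"
    unfolding \<open>c + c = 1\<close> by simp
  then have "mstar (mk2 1 x 0 1) ** A ** mk2 1 x 0 1 = hyperbolic (A $ 1 $ 2)"
    unfolding A hyperbolic_def by (simp add: mstar_mk2 mk2_mult algebra_simps)
  then show ?thesis
    using congruent_mat_mk2[of 1 1 x 0 A] by simp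
qed

lemma congruent_hyperbolic_smult:
  fixes \<rho> :: "'a::field poly"
  assumes "k \<noteq> 0"
  shows "congruent_mat (hyperbolic (smult k \<rho>)) (hyperbolic \<rho>)"
proof -
  have "mstar (mk2 [:inverse k:] 0 0 1) ** hyperbolic (smult k \<rho>) ** mk2 [:inverse k:] 0 0 1
      = hyperbolic \<rho>"
    unfolding hyperbolic_def using assms by (simp add: mstar_mk2 mk2_mult)
  moreover have "[:inverse k:] * 1 - 0 * 0 dvd 1"
    using assms by (simp add: is_unit_triv)
  ultimately show ?thesis
    using congruent_mat_mk2 by metis
qed

lemma congruent_corner_coprime:
  fixes A :: "'a::alg_closed_field poly ^ 2 ^ 2"
  assumes two: "(2::'a) \<noteq> 0" and sh: "skew_hermitian A" and "mgcd A = 1"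
    and \<beta>: "\<beta> * pinv \<beta> = det A"
  obtains A1 where "congruent_mat A A1" and "skew_hermitian A1" and "det A1 = det A"
    and "A1 $ 1 $ 1 \<noteq> 0" and "coprime (A1 $ 1 $ 1) \<beta>"
proof -
  have "poly (det A) 0 \<noteq> 0"
    by (rule det_skew_hermitian_2_at_0[OF two sh assms(3)])
  \<comment> \<open>The point \<open>1\<close> only serves to make the new corner entry a nonzero polynomial.\<close>
  define Z where "Z = insert 1 {x. poly (det A) x = 0}"
  have "det A \<noteq> 0"
    using \<open>poly (det A) 0 \<noteq> 0\<close> by auto
  then have "finite Z"
    unfolding Z_def by (simp add: poly_roots_finite)
  moreover have "0 \<notin> Z"
    unfolding Z_def using \<open>poly (det A) 0 \<noteq> 0\<close> by simp
  ultimately obtain y where y: "\<And>z. z \<in> Z \<Longrightarrow> poly ((mstar (mk2 1 0 y 1) ** A ** mk2 1 0 y 1) $ 1 $ 1) z \<noteq> 0"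
    using shear_corner_nonvanishing[OF two sh assms(3)] by blast
  define A1 where "A1 = mstar (mk2 1 0 y 1) ** A ** mk2 1 0 y 1"
  have "congruent_mat A A1"
    unfolding A1_def by (rule congruent_mat_mk2) simp
  moreover have "skew_hermitian A1"
    unfolding A1_def by (rule skew_hermitian_congruence[OF sh])
  moreover have "det A1 = det A"
    unfolding A1_def det_congruence_2 by (simp add: det_mk2)
  moreover have "A1 $ 1 $ 1 \<noteq> 0"
    using y[of 1] unfolding A1_def Z_def by auto
  moreover have "coprime (A1 $ 1 $ 1) \<beta>"
  proof (rule coprime_if_no_common_root)
    fix x
    assume "poly (A1 $ 1 $ 1) x = 0"
    then have "x \<notin> Z"
      using y unfolding A1_def by blast
    then show "poly \<beta> x \<noteq> 0"
      unfolding Z_def by (auto simp flip: \<beta>)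
  qed
  ultimately show ?thesis
    using that by blast
qed

lemma congruent_hyperbolic_pinv_factor:
  fixes A :: "'a::alg_closed_field poly ^ 2 ^ 2"
  assumes two: "(2::'a) \<noteq> 0" and sh: "skew_hermitian A" and "mgcd A = 1"
    and \<beta>: "\<beta> * pinv \<beta> = det A" and "no_opposite_roots \<beta>"
  shows "congruent_mat A (hyperbolic (pinv \<beta>))"
proof -
  obtain A1 where "congruent_mat A A1" and sh1: "skew_hermitian A1" and "det A1 = det A"
    and corner: "A1 $ 1 $ 1 \<noteq> 0" "coprime (A1 $ 1 $ 1) \<beta>"
    using congruent_corner_coprime[OF two sh assms(3) \<beta>] by blast
  then obtain E k where "congruent_mat A1 E" "skew_hermitian E" "E $ 1 $ 1 = 0"
    and "k \<noteq> 0" and E12: "E $ 1 $ 2 = smult k (pinv \<beta>)"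
    using isotropic_congruence[OF sh1 corner(1) _ corner(2)] \<beta> by metis
  have "coprime (E $ 1 $ 2) (pinv (E $ 1 $ 2))"
    unfolding E12 using \<open>k \<noteq> 0\<close> \<open>no_opposite_roots \<beta>\<close>
    by (intro coprime_if_no_common_root) (auto simp: no_opposite_roots_def)
  then have "congruent_mat E (hyperbolic (smult k (pinv \<beta>)))"
    using congruent_hyperbolic_if_corner_0[OF two \<open>skew_hermitian E\<close> \<open>E $ 1 $ 1 = 0\<close>] E12 by simp
  with \<open>congruent_mat A A1\<close> \<open>congruent_mat A1 E\<close> show ?thesis
    using congruent_hyperbolic_smult[OF \<open>k \<noteq> 0\<close>] congruent_mat_trans by blast
qed

theorem lemma4p4:
  fixes A B :: "'a::alg_closed_field poly ^ 2 ^ 2"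
  assumes "(2::'a) \<noteq> 0"
    and "skew_hermitian A" and "skew_hermitian B"
    and "mgcd A = 1" and "mgcd B = 1"
    and "det A = det B" and "det A \<noteq> 0"
  shows "congruent_mat A B"
proof -
  obtain \<beta> where \<beta>: "\<beta> * pinv \<beta> = det A" and "no_opposite_roots \<beta>"
    using even_poly_factorization[OF assms(1) det_skew_hermitian_2_even[OF assms(2)]
        det_skew_hermitian_2_at_0[OF assms(1,2,4)]] by blast
  have "congruent_mat A (hyperbolic (pinv \<beta>))"
    using congruent_hyperbolic_pinv_factor[OF assms(1,2,4) \<beta> \<open>no_opposite_roots \<beta>\<close>] .
  moreover have "congruent_mat B (hyperbolic (pinv \<beta>))"
    using congruent_hyperbolic_pinv_factor[OF assms(1,3,5) _ \<open>no_opposite_roots \<beta>\<close>] \<beta> assms(6) by simp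
  ultimately show ?thesis
    using congruent_mat_sym congruent_mat_trans by blast
qed

end
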